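(* Let $Z>0$, let $W_{at}$ be as in the context with Taylor coefficients $(w_{2k})_{k\ge0}$, let $R_1,\dots,R_n$ be the radial atomic functions with eigenvalues $\epsilon_1,\dots,\epsilon_n$, $\mathcal R=(R_1,\dots,R_n)^T$, $\mathcal E=\mathrm{diag}(\epsilon_1,\dots,\epsilon_n)$, and let $(\zeta_j)_{j\ge0}\subset\mathbb R^n$ be the coefficients of the expansion of $\mathcal R$ at $0$. Then there exist real numbers $(\mu_j^{(k)})_{0\le j\le k\le n-1}$ and $(\nu_j^{(k)})_{0\le j\le k\le n-1}$ such that $$\zeta_{2k}=\sum_{j=0}^k\mu_j^{(k)}\mathcal E^j\zeta_0,\qquad\zeta_{2k+1}=\sum_{j=0}^k\nu_j^{(k)}\mathcal E^j\zeta_0,$$ with $\mu_k^{(k)}\ne0$ for every $0\le k\le n-1$. Moreover, $$\zeta_1=-Z\zeta_0,\qquad\zeta_2=-\tfrac13\mathcal E\zeta_0+\tfrac13(Z^2+w_0)\zeta_0,\qquad\zeta_3=\tfrac29Z\mathcal E\zeta_0-\Big(\tfrac{Z^3}{18}+\tfrac29Zw_0\Big)\zeta_0,$$ $$\zeta_4=\tfrac1{30}\mathcal E^2\zeta_0-\Big(\tfrac{Z^2}{18}+\tfrac{w_0}{15}\Big)\mathcal E\zeta_0+\Big(\tfrac{Z^4}{180}+\tfrac{Z^2w_0}{18}+\tfrac{w_0^2}{30}+\tfrac{w_2}{10}\Big)\zeta_0,$$ $$\zeta_5=-\tfrac{23}{1350}Z\mathcal E^2\zeta_0+\Big(\tfrac{Z^3}{135}+\tfrac{23}{675}w_0Z\Big)\mathcal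 E\zeta_0-\Big(\tfrac{Z^5}{2700}+\tfrac{Z^3w_0}{135}+\tfrac{23}{1350}Zw_0^2+\tfrac{11}{150}Zw_2\Big)\zeta_0.$$
   Context: $W_{at}$ is a smooth bounded real function on $[0,\infty)$ such that $\mathbf x\mapsto W_{at}(|\mathbf x|)$ is smooth on $\mathbb R^3$; hence for every $N$, $W_{at}(r)=\sum_{k=0}^Nw_{2k}r^{2k}+O(r^{2N+2})$ as $r\to0$, which defines the reals $w_{2k}$. For $k=1,\dots,n$, $\varphi_k(\mathbf x)=R_k(|\mathbf x|)Y_{00}$ ($Y_{00}=1/\sqrt{4\pi}$) are $L^2$-normalized eigenfunctions of the atomic Hamiltonian $-\frac12\Delta-\frac{Z}{|\mathbf x|}+W_{at}(|\mathbf x|)$ on $L^2(\mathbb R^3)$ with angular momentum $0$ and eigenvalues $\epsilon_k$; $R_k$ is continuous on $[0,\infty)$ and satisfies $-\frac12R_k''-\frac1rR_k'-\frac ZrR_k+W_{at}R_k=\epsilon_kR_k$ on $(0,\infty)$. The vectors $\zeta_j\in\mathbb R^n$ are the coefficients of the singular expansion of $\mathcal R$ at $r=0$: for every $N$, $\mathcal R(r)-\sum_{j=0}^N\zeta_jr^j=O(r^{N+1})$ as $r\to0^+$. *)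

theory Defs
  imports "HOL-Analysis.Analysis" "HOL-Library.Landau_Symbols"
begin

fun Ck_fun :: "nat \<Rightarrow> ('a::real_normed_vector \<Rightarrow> real) \<Rightarrow> bool" where
  "Ck_fun 0 f = continuous_on UNIV f"
| "Ck_fun (Suc k) f = ((\<forall>x. f differentiable (at x)) \<and>
       (\<forall>v. Ck_fun k (\<lambda>x. frechet_derivative f (at x) v)))"

definition smooth_fun :: "('a::real_normed_vector \<Rightarrow> real) \<Rightarrow> bool" where
  "smooth_fun f \<longleftrightarrow> (\<forall>k. Ck_fun k f)"

end

theory Submission
  imports Defs "HOL-Computational_Algebra.Polynomial"
begin

(* Multiplying the radial equation by -2r^2 puts it in divergence form
   (r^2 R')' = -2Z r R + 2 r^2 (W - \<epsilon>) R, and comparing coefficients of r^m gives the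
   recurrence m(m+1) \<zeta>_m = -2Z \<zeta>_(m-1) + 2 \<Sigma>_a \<omega>_a \<zeta>_(m-2-a) - 2 \<epsilon> \<zeta>_(m-2),
   where \<omega>_a are the Taylor coefficients of W (zero for odd a).  Only the expansion of R
   itself is known, not that of R', so the comparison is justified by induction on m: if the
   recurrence holds below m and E is R minus its Taylor polynomial of degree m, then
   E = O(r^(m+1)) while (r^2 E')' = d r^m + O(r^(m+1)).  The bounded derivative makes r^2 E'
   converge as r \<rightarrow> 0+, to 0 because E \<rightarrow> 0; then l'Hopital's rule, applied twice, gives
   E / r^m \<rightarrow> d / (m (m+1)), forcing d = 0.
   Solving the recurrence gives \<zeta>_m = P_m(\<epsilon>) \<zeta>_0 for polynomials P_m of degree at most m/2;
   the coefficient of \<epsilon>^k in P_(2k) is (-2)^k / (2k+1)!, and the explicit formulas are the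
   first five steps of the recurrence. *)

lemma power_bigo_power_at_right_0:
  assumes "b \<le> a"
  shows "(\<lambda>r::real. r ^ a) \<in> O[at_right 0](\<lambda>r. r ^ b)"
proof (rule bigoI[where c = 1])
  have "eventually (\<lambda>r::real. 0 < r \<and> r < 1) (at_right 0)"
    unfolding eventually_at_right_field by (intro exI[of _ 1]) auto
  then show "eventually (\<lambda>r. norm (r ^ a) \<le> 1 * norm (r ^ b)) (at_right (0::real))"
    by eventually_elim (use assms in \<open>auto simp: power_decreasing abs_of_nonneg\<close>)
qed

lemma bigo_power_Suc_imp_tendsto_divide:
  assumes "f \<in> O[at_right 0](\<lambda>r::real. r ^ (k + 1))"
  shows "((\<lambda>r. f r / r ^ k) \<longlongrightarrow> 0) (at_right 0)"
proof -
  have pos: "eventually (\<lambda>r::real. 0 < r) (at_right 0)"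
    by (simp add: eventually_at_right_less)
  have "((\<lambda>r::real. r ^ (k + 1) / r ^ k) \<longlongrightarrow> 0) (at_right 0)"
    by (rule Lim_transform_eventually[OF tendsto_ident_at])
      (use pos in \<open>eventually_elim, simp\<close>)
  then have "(\<lambda>r::real. r ^ (k + 1)) \<in> o[at_right 0](\<lambda>r. r ^ k)"
    by (rule smalloI_tendsto) (use pos in eventually_elim, simp)
  then show ?thesis
    by (rule smalloD_tendsto[OF landau_o.big_small_trans[OF assms]])
qed

lemma bigo_power_Suc_imp_tendsto_0:
  assumes "f \<in> O[at_right 0](\<lambda>r::real. r ^ (k + 1))"
  shows "(f \<longlongrightarrow> 0) (at_right 0)"
  using bigo_power_Suc_imp_tendsto_divide[of f 0]
    landau_o.big_trans[OF assms power_bigo_power_at_right_0[of 1 "k + 1"]]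
  by simp

lemma tendsto_imp_bigo_1: "(f \<longlongrightarrow> c) F \<Longrightarrow> f \<in> O[F](\<lambda>_. 1)"
  by (rule bigoI_tendsto[where c = c]) simp_all

lemma poly_minus_partial_sum_bigo:
  "(\<lambda>r. poly p r - (\<Sum>j\<le>m. coeff p j * r ^ j)) \<in> O[at_right 0](\<lambda>r::real. r ^ (m + 1))"
proof -
  define M where "M = max m (degree p)"
  have "poly p r - (\<Sum>j\<le>m. coeff p j * r ^ j) = (\<Sum>j\<in>{m<..M}. coeff p j * r ^ j)" for r
  proof -
    have "poly p r = (\<Sum>j\<le>M. coeff p j * r ^ j)"
      unfolding poly_altdef M_def by (rule sum.mono_neutral_left) (auto simp: coeff_eq_0)
    moreover have "{..M} = {..m} \<union> {m<..M}" "{..m} \<inter> {m<..M} = {}"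
      using M_def by auto
    ultimately show ?thesis
      by (simp add: sum.union_disjoint)
  qed
  moreover have "(\<lambda>r. \<Sum>j\<in>{m<..M}. coeff p j * r ^ j) \<in> O[at_right 0](\<lambda>r::real. r ^ (m + 1))"
    by (intro big_sum_in_bigo)
      (auto simp only: cmult_in_bigo_iff greaterThanAtMost_iff intro!: disjI2 power_bigo_power_at_right_0)
  ultimately show ?thesis
    by simp
qed

definition asymp_expansion :: "(real \<Rightarrow> real) \<Rightarrow> (nat \<Rightarrow> real) \<Rightarrow> bool" where
  "asymp_expansion f c \<longleftrightarrow>
     (\<forall>N. (\<lambda>r. f r - (\<Sum>j\<le>N. c j * r ^ j)) \<in> O[at_right 0](\<lambda>r. r ^ (N + 1)))"

definition taylor_poly :: "(nat \<Rightarrow> real) \<Rightarrow> nat \<Rightarrow> real poly" where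
  "taylor_poly c m = (\<Sum>j\<le>m. monom (c j) j)"

lemma poly_taylor_poly: "poly (taylor_poly c m) r = (\<Sum>j\<le>m. c j * r ^ j)"
  by (simp add: taylor_poly_def poly_sum poly_monom)

lemma coeff_taylor_poly: "coeff (taylor_poly c m) j = (if j \<le> m then c j else 0)"
  by (simp add: taylor_poly_def coeff_sum)

lemma asymp_expansion_remainder:
  "asymp_expansion f c \<Longrightarrow>
    (\<lambda>r. f r - poly (taylor_poly c m) r) \<in> O[at_right 0](\<lambda>r. r ^ (m + 1))"
  by (simp add: asymp_expansion_def poly_taylor_poly)

lemma asymp_expansion_imp_bigo_1:
  assumes "asymp_expansion f c"
  shows "f \<in> O[at_right 0](\<lambda>_. 1)"
proof -
  have "(\<lambda>r. f r - c 0) \<in> O[at_right 0](\<lambda>r. r ^ 1)"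
    using assms[unfolded asymp_expansion_def, rule_format, of 0] by simp
  from landau_o.big_trans[OF this power_bigo_power_at_right_0[of 0 1]]
  have "(\<lambda>r. f r - c 0) \<in> O[at_right 0](\<lambda>_. 1)"
    by simp
  from sum_in_bigo(1)[OF this, of "\<lambda>_. c 0"] show ?thesis
    by simp
qed

lemma sum_even_coeffs:
  "(\<Sum>j\<le>N. (if even j then w j else 0) * r ^ j) = (\<Sum>k\<le>N div 2. w (2 * k) * (r::real) ^ (2 * k))"
proof (induction N)
  case (Suc N)
  then show ?case
    by (cases "even N") (simp_all add: odd_pos)
qed simp

lemma asymp_expansion_even:
  assumes "\<forall>N. (\<lambda>r. W r - (\<Sum>k\<le>N. w (2 * k) * r ^ (2 * k)))
                  \<in> O[at_right 0](\<lambda>r. r ^ (2 * N + 2))"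
  shows "asymp_expansion W (\<lambda>j. if even j then w j else 0)"
  unfolding asymp_expansion_def sum_even_coeffs
proof
  fix N
  have "(\<lambda>r::real. r ^ (2 * (N div 2) + 2)) \<in> O[at_right 0](\<lambda>r. r ^ (N + 1))"
    by (rule power_bigo_power_at_right_0) linarith
  with assms show "(\<lambda>r. W r - (\<Sum>k\<le>N div 2. w (2 * k) * r ^ (2 * k)))
      \<in> O[at_right 0](\<lambda>r. r ^ (N + 1))"
    using landau_o.big_trans by blast
qed

lemma bounded_deriv_imp_convergent_at_right:
  fixes h h' :: "real \<Rightarrow> real"
  assumes "eventually (\<lambda>r. (h has_real_derivative h' r) (at r)) (at_right a)"
    and "eventually (\<lambda>r. \<bar>h' r\<bar> \<le> B) (at_right a)"
  shows "\<exists>L. (h \<longlongrightarrow> L) (at_right a)"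
proof -
  obtain b where "a < b"
    and hb: "\<And>r. a < r \<Longrightarrow> r < b \<Longrightarrow> (h has_real_derivative h' r) (at r) \<and> \<bar>h' r\<bar> \<le> B"
    using eventually_conj[OF assms] unfolding eventually_at_right_field by blast
  have "0 \<le> B"
    using hb[of "(a + b) / 2"] \<open>a < b\<close> by auto
  have "B-lipschitz_on {a<..<b} h"
  proof (rule lipschitz_onI)
    fix x y assume "x \<in> {a<..<b}" "y \<in> {a<..<b}"
    then have "norm (h x - h y) \<le> B * norm (x - y)"
      by (intro field_differentiable_bound[of "{a<..<b}" h h'])
        (auto intro: has_field_derivative_at_within dest: hb)
    then show "dist (h x) (h y) \<le> B * dist x y"
      by (simp add: dist_real_def)
  qed fact
  moreover have "a \<in> closure {a<..<b}"
    using \<open>a < b\<close> by simp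
  ultimately obtain L where "(h \<longlongrightarrow> L) (at a within {a<..<b})"
    using uniformly_continuous_on_extension_at_closure lipschitz_on_uniformly_continuous by metis
  moreover have "at a within {a<..<b} = at_right a"
    by (rule at_within_nhd[of _ "{a - 1<..<b}"]) (use \<open>a < b\<close> in auto)
  ultimately show ?thesis by auto
qed

lemma lhopital_right_0_power:
  fixes f f' :: "real \<Rightarrow> real"
  assumes "(f \<longlongrightarrow> 0) (at_right 0)"
    and "eventually (\<lambda>r. (f has_real_derivative f' r) (at r)) (at_right 0)"
    and "((\<lambda>r. f' r / r ^ m) \<longlongrightarrow> c) (at_right 0)"
  shows "((\<lambda>r. f r / r ^ (m + 1)) \<longlongrightarrow> c / real (m + 1)) (at_right 0)"
proof (rule lhopital_right_0[OF assms(1) _ _ _ assms(2)])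
  have pos: "eventually (\<lambda>r::real. 0 < r) (at_right 0)"
    by (simp add: eventually_at_right_less)
  show "((\<lambda>r::real. r ^ (m + 1)) \<longlongrightarrow> 0) (at_right 0)"
    by (auto intro!: tendsto_eq_intros simp: tendsto_ident_at)
  show "eventually (\<lambda>r::real. r ^ (m + 1) \<noteq> 0) (at_right 0)"
    "eventually (\<lambda>r::real. real (m + 1) * r ^ m \<noteq> 0) (at_right 0)"
    using pos by (eventually_elim, simp)+
  show "eventually (\<lambda>r. ((\<lambda>r. r ^ (m + 1)) has_real_derivative real (m + 1) * r ^ m) (at r))
      (at_right 0)"
    by (intro always_eventually allI) (use DERIV_pow[of "m + 1"] in simp)
  show "((\<lambda>r. f' r / (real (m + 1) * r ^ m)) \<longlongrightarrow> c / real (m + 1)) (at_right 0)"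
    using tendsto_divide[OF assms(3) tendsto_const[of "real (m + 1)"]] by (simp add: field_simps)
qed

lemma sq_deriv_limit_eq_0:
  fixes E E' :: "real \<Rightarrow> real"
  assumes "(E \<longlongrightarrow> 0) (at_right 0)"
    and "eventually (\<lambda>r. (E has_real_derivative E' r) (at r)) (at_right 0)"
    and "((\<lambda>r. r\<^sup>2 * E' r) \<longlongrightarrow> L) (at_right 0)"
  shows "L = 0"
proof -
  have pos: "eventually (\<lambda>r::real. 0 < r) (at_right 0)"
    by (simp add: eventually_at_right_less)
  have "((\<lambda>r. E r / inverse r) \<longlongrightarrow> - L) (at_right 0)"
  proof (rule lhopital_right_0_at_top[OF filterlim_inverse_at_top_right _ assms(2)])
    show "eventually (\<lambda>r::real. - inverse (r\<^sup>2) \<noteq> 0) (at_right 0)"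
      using pos by eventually_elim simp
    show "eventually (\<lambda>r. (inverse has_real_derivative - inverse (r\<^sup>2)) (at r)) (at_right 0)"
      using pos by eventually_elim (auto intro!: derivative_eq_intros simp: power2_eq_square)
    show "((\<lambda>r. E' r / - inverse (r\<^sup>2)) \<longlongrightarrow> - L) (at_right 0)"
      using tendsto_minus[OF assms(3)] by (simp add: divide_inverse mult.commute)
  qed
  moreover have "((\<lambda>r. E r / inverse r) \<longlongrightarrow> 0 * 0) (at_right 0)"
    unfolding divide_inverse inverse_inverse_eq
    by (intro tendsto_mult assms(1)) (simp add: tendsto_ident_at)
  ultimately show "L = 0"
    using tendsto_unique[OF trivial_limit_at_right_real] by fastforce
qed

lemma sq_deriv_deriv_power_coeff_eq_0:
  fixes E E' h' :: "real \<Rightarrow> real"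
  assumes "m \<ge> 1"
    and E: "E \<in> O[at_right 0](\<lambda>r. r ^ (m + 1))"
    and dE: "eventually (\<lambda>r. (E has_real_derivative E' r) (at r)) (at_right 0)"
    and dh: "eventually (\<lambda>r. ((\<lambda>s. s\<^sup>2 * E' s) has_real_derivative h' r) (at r)) (at_right 0)"
    and h': "(\<lambda>r. h' r - d * r ^ m) \<in> O[at_right 0](\<lambda>r. r ^ (m + 1))"
  shows "d = 0"
proof -
  have pos: "eventually (\<lambda>r::real. 0 < r) (at_right 0)"
    by (simp add: eventually_at_right_less)
  have "((\<lambda>r. (h' r - d * r ^ m) / r ^ m + d) \<longlongrightarrow> d) (at_right 0)"
    using tendsto_add[OF bigo_power_Suc_imp_tendsto_divide[OF h'] tendsto_const[of d]] by simp
  then have h'_div: "((\<lambda>r. h' r / r ^ m) \<longlongrightarrow> d) (at_right 0)"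
    by (rule Lim_transform_eventually) (use pos in \<open>eventually_elim, simp add: field_simps\<close>)
  have "((\<lambda>r. h' r / r ^ m * r ^ m) \<longlongrightarrow> d * 0 ^ m) (at_right 0)"
    by (intro tendsto_mult h'_div tendsto_power tendsto_ident_at)
  moreover have "d * 0 ^ m = 0"
    using \<open>m \<ge> 1\<close> by simp
  ultimately have "((\<lambda>r. h' r / r ^ m * r ^ m) \<longlongrightarrow> 0) (at_right 0)"
    by (simp only:)
  then have "(h' \<longlongrightarrow> 0) (at_right 0)"
    by (rule Lim_transform_eventually) (use pos in eventually_elim, simp)
  then have "eventually (\<lambda>r. \<bar>h' r\<bar> \<le> 1) (at_right 0)"
    by (rule eventually_mono[OF tendstoD[of _ 0 _ 1]]) (simp_all add: dist_real_def)
  then obtain L where L: "((\<lambda>r. r\<^sup>2 * E' r) \<longlongrightarrow> L) (at_right 0)"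
    using bounded_deriv_imp_convergent_at_right[OF dh] by blast
  have E0: "(E \<longlongrightarrow> 0) (at_right 0)"
    by (rule bigo_power_Suc_imp_tendsto_0[OF E])
  then have "L = 0"
    by (rule sq_deriv_limit_eq_0[OF _ dE L])
  with L have "((\<lambda>r. r\<^sup>2 * E' r / r ^ (m + 1)) \<longlongrightarrow> d / real (m + 1)) (at_right 0)"
    by (intro lhopital_right_0_power[OF _ dh h'_div]) simp
  then have "((\<lambda>r. E' r / r ^ (m - 1)) \<longlongrightarrow> d / real (m + 1)) (at_right 0)"
  proof (rule Lim_transform_eventually)
    show "eventually (\<lambda>r. r\<^sup>2 * E' r / r ^ (m + 1) = E' r / r ^ (m - 1)) (at_right 0)"
      using pos
    proof eventually_elim
      case (elim r)
      have "r ^ (m + 1) = r\<^sup>2 * r ^ (m - 1)"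
        using \<open>m \<ge> 1\<close> by (simp flip: power_add)
      then show ?case using elim by simp
    qed
  qed
  from lhopital_right_0_power[OF E0 dE this]
  have "((\<lambda>r. E r / r ^ m) \<longlongrightarrow> d / real (m + 1) / real m) (at_right 0)"
    using \<open>m \<ge> 1\<close> by simp
  moreover have "((\<lambda>r. E r / r ^ m) \<longlongrightarrow> 0) (at_right 0)"
    by (rule bigo_power_Suc_imp_tendsto_divide[OF E])
  ultimately have "d / real (m + 1) / real m = 0"
    using tendsto_unique[OF trivial_limit_at_right_real] by blast
  then show "d = 0"
    using \<open>m \<ge> 1\<close> by simp
qed

(* The coefficient of r^m in -2Z r R + 2 r^2 (W - e) R for R = \<Sigma> z_j r^j, W = \<Sigma> \<omega>_a r^a. *)
fun ode_rhs :: "real \<Rightarrow> real \<Rightarrow> (nat \<Rightarrow> real) \<Rightarrow> (nat \<Rightarrow> real) \<Rightarrow> nat \<Rightarrow> real" where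
  "ode_rhs Z e \<omega> z 0 = 0"
| "ode_rhs Z e \<omega> z (Suc 0) = - 2 * Z * z 0"
| "ode_rhs Z e \<omega> z (Suc (Suc m)) =
     - 2 * Z * z (Suc m) + 2 * (\<Sum>a\<le>m. \<omega> a * z (m - a)) - 2 * e * z m"

lemma radial_ode_divergence_form:
  fixes R W :: "real \<Rightarrow> real"
  assumes "r > 0"
    and "(R has_real_derivative deriv R r) (at r)"
    and "(deriv R has_real_derivative deriv (deriv R) r) (at r)"
    and "- (1/2) * deriv (deriv R) r - (1/r) * deriv R r - (Z/r) * R r + W r * R r = e * R r"
  shows "((\<lambda>s. s\<^sup>2 * deriv R s) has_real_derivative
      - 2 * Z * r * R r + 2 * r\<^sup>2 * (W r - e) * R r) (at r)"
proof -
  have "2 * r * deriv R r + r\<^sup>2 * deriv (deriv R) r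
      = - 2 * r\<^sup>2 * (- (1/2) * deriv (deriv R) r - (1/r) * deriv R r - (Z/r) * R r + W r * R r)
        - 2 * Z * r * R r + 2 * r\<^sup>2 * W r * R r"
    using \<open>r > 0\<close> by (simp add: field_simps power2_eq_square)
  also have "\<dots> = - 2 * Z * r * R r + 2 * r\<^sup>2 * (W r - e) * R r"
    unfolding assms(4) by (simp add: algebra_simps)
  finally have divergence: "2 * r * deriv R r + r\<^sup>2 * deriv (deriv R) r
      = - 2 * Z * r * R r + 2 * r\<^sup>2 * (W r - e) * R r" .
  have "((\<lambda>s. s\<^sup>2 * deriv R s) has_real_derivative
      2 * r * deriv R r + r\<^sup>2 * deriv (deriv R) r) (at r)"
    by (auto intro!: derivative_eq_intros assms(3))
  then show ?thesis
    unfolding divergence .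
qed

lemma taylor_remainder_derivatives:
  fixes R W :: "real \<Rightarrow> real"
  assumes R_diff: "\<forall>r>0. (R has_real_derivative deriv R r) (at r) \<and>
                   (deriv R has_real_derivative deriv (deriv R) r) (at r)"
    and R_ode: "\<forall>r>0. - (1/2) * deriv (deriv R) r - (1/r) * deriv R r
                  - (Z/r) * R r + W r * R r = e * R r"
  shows "eventually (\<lambda>r. ((\<lambda>s. R s - poly p s) has_real_derivative
      deriv R r - poly (pderiv p) r) (at r)) (at_right 0)"
    and "eventually (\<lambda>r. ((\<lambda>s. s\<^sup>2 * (deriv R s - poly (pderiv p) s)) has_real_derivative
      - 2 * Z * r * R r + 2 * r\<^sup>2 * (W r - e) * R r - poly (pderiv (monom 1 2 * pderiv p)) r)
      (at r)) (at_right 0)"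
proof -
  have pos: "eventually (\<lambda>r::real. 0 < r) (at_right 0)"
    by (simp add: eventually_at_right_less)
  then show "eventually (\<lambda>r. ((\<lambda>s. R s - poly p s) has_real_derivative
      deriv R r - poly (pderiv p) r) (at r)) (at_right 0)"
    by eventually_elim (use R_diff in \<open>auto intro!: DERIV_diff poly_DERIV\<close>)
  have sq_deriv: "(\<lambda>s. s\<^sup>2 * (deriv R s - poly (pderiv p) s))
      = (\<lambda>s. s\<^sup>2 * deriv R s - poly (monom 1 2 * pderiv p) s)"
    by (simp add: fun_eq_iff poly_monom algebra_simps)
  from pos show "eventually (\<lambda>r. ((\<lambda>s. s\<^sup>2 * (deriv R s - poly (pderiv p) s)) has_real_derivative
      - 2 * Z * r * R r + 2 * r\<^sup>2 * (W r - e) * R r - poly (pderiv (monom 1 2 * pderiv p)) r)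
      (at r)) (at_right 0)"
  proof eventually_elim
    case (elim r)
    show ?case
      unfolding sq_deriv using R_diff R_ode elim
      by (intro DERIV_diff radial_ode_divergence_form poly_DERIV) auto
  qed
qed

definition ode_rhs_poly :: "real \<Rightarrow> real \<Rightarrow> real poly \<Rightarrow> real poly \<Rightarrow> real poly" where
  "ode_rhs_poly Z e q p = smult (- 2 * Z) (monom 1 1 * p) + smult 2 (monom 1 2 * ((q - [:e:]) * p))"

lemma coeff_pderiv_monom_2_pderiv:
  "coeff (pderiv (monom 1 2 * pderiv p)) j = real j * real (j + 1) * coeff (p :: real poly) j"
  by (cases j) (simp_all add: coeff_pderiv coeff_monom_mult)

lemma coeff_ode_rhs_poly:
  assumes "j \<le> m"
  shows "coeff (ode_rhs_poly Z e (taylor_poly \<omega> m) (taylor_poly z m)) j = ode_rhs Z e \<omega> z j"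
proof -
  consider "j = 0" | "j = Suc 0" | k where "j = Suc (Suc k)"
    by (metis nat.exhaust)
  then show ?thesis
  proof cases
    case 3
    have "coeff ((taylor_poly \<omega> m - [:e:]) * taylor_poly z m) k
        = (\<Sum>a\<le>k. \<omega> a * z (k - a) - (if a = 0 then e * z k else 0))"
      unfolding coeff_mult using 3 assms
      by (intro sum.cong) (auto simp: coeff_taylor_poly coeff_pCons' left_diff_distrib)
    also have "\<dots> = (\<Sum>a\<le>k. \<omega> a * z (k - a)) - e * z k"
      by (simp add: sum_subtractf)
    finally show ?thesis
      using 3 assms by (simp add: ode_rhs_poly_def coeff_monom_mult coeff_taylor_poly)
  qed (use assms in \<open>simp_all add: ode_rhs_poly_def coeff_monom_mult coeff_taylor_poly\<close>)
qed

lemma ode_rhs_poly_residual_bigo: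
  fixes R W :: "real \<Rightarrow> real"
  assumes R: "(\<lambda>r. R r - poly p r) \<in> O[at_right 0](\<lambda>r. r ^ (m + 1))"
    and W: "(\<lambda>r. W r - poly q r) \<in> O[at_right 0](\<lambda>r. r ^ (m + 1))"
    and W_bdd: "W \<in> O[at_right 0](\<lambda>_. 1)"
  shows "(\<lambda>r. - 2 * Z * r * R r + 2 * r\<^sup>2 * (W r - e) * R r - poly (ode_rhs_poly Z e q p) r)
    \<in> O[at_right 0](\<lambda>r. r ^ (m + 1))"
proof -
  have lin: "(\<lambda>r::real. - 2 * Z * r) \<in> O[at_right 0](\<lambda>_. 1)"
    and quad: "(\<lambda>r::real. 2 * r\<^sup>2) \<in> O[at_right 0](\<lambda>_. 1)"
    and p: "poly p \<in> O[at_right 0](\<lambda>_. 1)"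
    by (auto intro!: tendsto_imp_bigo_1 tendsto_eq_intros simp: tendsto_ident_at)
  have W_e: "(\<lambda>r. W r - e) \<in> O[at_right 0](\<lambda>_. 1)"
    using sum_in_bigo(2)[OF W_bdd, of "\<lambda>_. e"] by simp
  have "(\<lambda>r. (R r - poly p r) * (- 2 * Z * r)
      + ((R r - poly p r) * (W r - e) + (W r - poly q r) * poly p r) * (2 * r\<^sup>2))
    \<in> O[at_right 0](\<lambda>r. r ^ (m + 1))"
    by (intro sum_in_bigo(1) landau_o.big_1_mult[OF _ lin] landau_o.big_1_mult[OF _ quad]
        landau_o.big_1_mult[OF R W_e] landau_o.big_1_mult[OF W p] R)
  then show ?thesis
    by (simp add: ode_rhs_poly_def poly_monom algebra_simps)
qed

lemma ode_recurrence:
  fixes R W :: "real \<Rightarrow> real" and z \<omega> :: "nat \<Rightarrow> real"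
  assumes W: "asymp_expansion W \<omega>" and R: "asymp_expansion R z"
    and R_diff: "\<forall>r>0. (R has_real_derivative deriv R r) (at r) \<and>
                   (deriv R has_real_derivative deriv (deriv R) r) (at r)"
    and R_ode: "\<forall>r>0. - (1/2) * deriv (deriv R) r - (1/r) * deriv R r
                  - (Z/r) * R r + W r * R r = e * R r"
  shows "real m * real (m + 1) * z m = ode_rhs Z e \<omega> z m"
proof (induction m rule: less_induct)
  case (less m)
  show ?case
  proof (cases "m = 0")
    case False
    define p where "p = taylor_poly z m"
    define P where "P = ode_rhs_poly Z e (taylor_poly \<omega> m) p"
    define D where "D = pderiv (monom 1 2 * pderiv p)"
    define d where "d = ode_rhs Z e \<omega> z m - real m * real (m + 1) * z m"
    define h' where "h' r = - 2 * Z * r * R r + 2 * r\<^sup>2 * (W r - e) * R r - poly D r" for r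
    note dE = taylor_remainder_derivatives(1)[OF R_diff R_ode, where p = p]
    note dh = taylor_remainder_derivatives(2)[OF R_diff R_ode, where p = p, folded D_def]
    have coeff_P_D: "coeff (P - D) j = (if j = m then d else 0)" if "j \<le> m" for j
      using that less.IH[of j] coeff_ode_rhs_poly[OF that, where Z = Z and e = e and \<omega> = \<omega> and z = z]
      by (simp add: P_def D_def d_def p_def coeff_pderiv_monom_2_pderiv coeff_taylor_poly)
    have "(\<Sum>j\<le>m. coeff (P - D) j * r ^ j) = d * r ^ m" for r :: real
      by (simp add: coeff_P_D lessThan_Suc_atMost[symmetric] del: coeff_diff)
    then have h'_split: "(\<lambda>r. h' r - d * r ^ m)
        = (\<lambda>r. (- 2 * Z * r * R r + 2 * r\<^sup>2 * (W r - e) * R r - poly P r)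
            + (poly (P - D) r - (\<Sum>j\<le>m. coeff (P - D) j * r ^ j)))"
      by (simp add: fun_eq_iff h'_def)
    have residual: "(\<lambda>r. - 2 * Z * r * R r + 2 * r\<^sup>2 * (W r - e) * R r - poly P r)
        \<in> O[at_right 0](\<lambda>r. r ^ (m + 1))"
      unfolding P_def p_def
      by (rule ode_rhs_poly_residual_bigo[OF asymp_expansion_remainder[OF R]
            asymp_expansion_remainder[OF W] asymp_expansion_imp_bigo_1[OF W]])
    have "(\<lambda>r. h' r - d * r ^ m) \<in> O[at_right 0](\<lambda>r. r ^ (m + 1))"
      unfolding h'_split by (rule sum_in_bigo(1)[OF residual poly_minus_partial_sum_bigo])
    then have "d = 0"
      using \<open>m \<noteq> 0\<close>
      by (intro sq_deriv_deriv_power_coeff_eq_0[OF _ asymp_expansion_remainder[OF R, of m, folded p_def] dE dh])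
        (simp_all add: h'_def)
    then show ?thesis
      by (simp add: d_def)
  qed simp
qed

context
  fixes Z :: real and \<omega> :: "nat \<Rightarrow> real"
begin

fun zeta_poly :: "nat \<Rightarrow> real poly" where
  "zeta_poly 0 = 1"
| "zeta_poly (Suc 0) = [:- Z:]"
| "zeta_poly (Suc (Suc m)) = smult (1 / (real (m + 2) * real (m + 3)))
     (smult (- 2 * Z) (zeta_poly (Suc m))
      + smult 2 (\<Sum>a\<le>m. smult (\<omega> a) (zeta_poly (m - a)))
      - smult 2 ([:0, 1:] * zeta_poly m))"

end

lemma poly_zeta_poly:
  assumes rec: "\<And>m. real m * real (m + 1) * z m = ode_rhs Z e \<omega> z m"
  shows "z m = poly (zeta_poly Z \<omega> m) e * z 0"
proof (induction m rule: zeta_poly.induct)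
  case (3 m)
  define D where "D = real (m + 2) * real (m + 3)"
  have "D \<noteq> 0" by (simp add: D_def)
  have conv: "(\<Sum>a\<le>m. \<omega> a * z (m - a)) = (\<Sum>a\<le>m. \<omega> a * poly (zeta_poly Z \<omega> (m - a)) e) * z 0"
    using 3(2) by (auto simp: sum_distrib_right intro!: sum.cong)
  have "D * z (Suc (Suc m))
      = - 2 * Z * z (Suc m) + 2 * (\<Sum>a\<le>m. \<omega> a * z (m - a)) - 2 * e * z m"
    using rec[of "Suc (Suc m)"] by (simp add: D_def algebra_simps)
  also have "\<dots> = D * poly (zeta_poly Z \<omega> (Suc (Suc m))) e * z 0"
  proof -
    have "smult D (zeta_poly Z \<omega> (Suc (Suc m))) = smult (- 2 * Z) (zeta_poly Z \<omega> (Suc m))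
        + smult 2 (\<Sum>a\<le>m. smult (\<omega> a) (zeta_poly Z \<omega> (m - a))) - smult 2 ([:0, 1:] * zeta_poly Z \<omega> m)"
      using \<open>D \<noteq> 0\<close> by (simp add: D_def)
    from arg_cong[where f = "\<lambda>p. poly p e * z 0", OF this] show ?thesis
      unfolding conv using 3(1,3) by (simp add: poly_sum algebra_simps)
  qed
  finally show ?case using \<open>D \<noteq> 0\<close> by (metis mult.assoc mult_left_cancel)
qed (use rec[of 1] in simp_all)

lemma degree_zeta_poly: "degree (zeta_poly Z \<omega> m) \<le> m div 2"
proof (induction m rule: zeta_poly.induct)
  case (3 m)
  have "degree (smult (\<omega> a) (zeta_poly Z \<omega> (m - a))) \<le> Suc (Suc m) div 2" if "a \<le> m" for a
    using 3(2)[of a] that div_le_mono[of "m - a" "Suc (Suc m)" 2] by (auto intro: order.trans[OF degree_smult_le])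
  then have "degree (\<Sum>a\<le>m. smult (\<omega> a) (zeta_poly Z \<omega> (m - a))) \<le> Suc (Suc m) div 2"
    by (intro degree_sum_le) auto
  moreover have "degree ([:0, 1:] * zeta_poly Z \<omega> m) \<le> Suc (Suc m) div 2"
    using 3(3) degree_mult_le[of "[:0, 1:]" "zeta_poly Z \<omega> m"] by simp
  moreover have "degree (zeta_poly Z \<omega> (Suc m)) \<le> Suc (Suc m) div 2"
    using 3(1) div_le_mono[of "Suc m" "Suc (Suc m)" 2] by simp
  ultimately show ?case
    by (simp only: zeta_poly.simps)
      (intro order.trans[OF degree_smult_le] degree_diff_le degree_add_le; assumption)
qed simp_all

lemma coeff_zeta_poly_even: "coeff (zeta_poly Z \<omega> (2 * k)) k = (- 2) ^ k / fact (2 * k + 1)"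
proof (induction k)
  case (Suc k)
  have "coeff (zeta_poly Z \<omega> (Suc (2 * k))) (Suc k) = 0"
    using degree_zeta_poly[of Z \<omega> "Suc (2 * k)"] by (intro coeff_eq_0) simp
  moreover have "coeff (zeta_poly Z \<omega> (2 * k - a)) (Suc k) = 0" for a
    using degree_zeta_poly[of Z \<omega> "2 * k - a"] by (intro coeff_eq_0) linarith
  ultimately have "coeff (zeta_poly Z \<omega> (Suc (Suc (2 * k)))) (Suc k)
      = - 2 * coeff (zeta_poly Z \<omega> (2 * k)) k / (real (2 * k + 2) * real (2 * k + 3))"
    by (simp add: coeff_sum)
  also have "\<dots> = (- 2) ^ Suc k / fact (2 * Suc k + 1)"
    unfolding Suc.IH by (simp add: fact_numeral algebra_simps)
  finally show ?case by simp
qed simp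

lemma poly_eq_sum_degree_le:
  fixes p :: "'a::comm_semiring_1 poly"
  assumes "degree p \<le> n"
  shows "poly p x = (\<Sum>i\<le>n. coeff p i * x ^ i)"
proof -
  have "poly p x = poly (\<Sum>i\<le>n. monom (coeff p i) i) x"
    by (simp only: poly_as_sum_of_monoms'[OF assms])
  also have "\<dots> = (\<Sum>i\<le>n. coeff p i * x ^ i)"
    by (simp add: poly_sum poly_monom)
  finally show ?thesis .
qed

lemma low_order_coeffs:
  assumes rec: "\<And>m. real m * real (m + 1) * z m = ode_rhs Z e \<omega> z m"
    and odd: "\<omega> 1 = 0" "\<omega> 3 = 0"
  shows "z 1 = - Z * z 0"
    and "z 2 = - (1/3) * e * z 0 + (1/3) * (Z^2 + \<omega> 0) * z 0"
    and "z 3 = (2/9) * Z * e * z 0 - (Z^3/18 + (2/9) * Z * \<omega> 0) * z 0"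
    and "z 4 = (1/30) * e ^ 2 * z 0 - (Z^2/18 + \<omega> 0/15) * e * z 0
               + (Z^4/180 + Z^2 * \<omega> 0/18 + (\<omega> 0)^2/30 + \<omega> 2/10) * z 0"
    and "z 5 = - (23/1350) * Z * e ^ 2 * z 0 + (Z^3/135 + (23/675) * \<omega> 0 * Z) * e * z 0
               - (Z^5/2700 + Z^3 * \<omega> 0/135 + (23/1350) * Z * (\<omega> 0)^2
                  + (11/150) * Z * \<omega> 2) * z 0"
proof -
  have r1: "2 * z 1 = - 2 * Z * z 0"
    using rec[of 1] by simp
  have r2: "6 * z 2 = - 2 * Z * z 1 + 2 * \<omega> 0 * z 0 - 2 * e * z 0"
    using rec[of 2] by (simp add: eval_nat_numeral)
  have r3: "12 * z 3 = - 2 * Z * z 2 + 2 * \<omega> 0 * z 1 - 2 * e * z 1"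
    using rec[of 3] odd by (simp add: eval_nat_numeral)
  have r4: "20 * z 4 = - 2 * Z * z 3 + 2 * (\<omega> 0 * z 2 + \<omega> 2 * z 0) - 2 * e * z 2"
    using rec[of 4] odd by (simp add: eval_nat_numeral)
  have r5: "30 * z 5 = - 2 * Z * z 4 + 2 * (\<omega> 0 * z 3 + \<omega> 2 * z 1) - 2 * e * z 3"
    using rec[of 5] odd by (simp add: eval_nat_numeral)
  show z1: "z 1 = - Z * z 0"
    using r1 by simp
  show z2: "z 2 = - (1/3) * e * z 0 + (1/3) * (Z^2 + \<omega> 0) * z 0"
    using r2 unfolding z1 by (simp add: field_simps power2_eq_square)
  show z3: "z 3 = (2/9) * Z * e * z 0 - (Z^3/18 + (2/9) * Z * \<omega> 0) * z 0"
    using r3 unfolding z1 z2 by (simp add: field_simps power2_eq_square power3_eq_cube)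
  show z4: "z 4 = (1/30) * e ^ 2 * z 0 - (Z^2/18 + \<omega> 0/15) * e * z 0
               + (Z^4/180 + Z^2 * \<omega> 0/18 + (\<omega> 0)^2/30 + \<omega> 2/10) * z 0"
    using r4 unfolding z2 z3 by (simp add: field_simps) algebra
  show "z 5 = - (23/1350) * Z * e ^ 2 * z 0 + (Z^3/135 + (23/675) * \<omega> 0 * Z) * e * z 0
               - (Z^5/2700 + Z^3 * \<omega> 0/135 + (23/1350) * Z * (\<omega> 0)^2
                  + (11/150) * Z * \<omega> 2) * z 0"
    using r5 unfolding z1 z3 z4 by (simp add: field_simps) algebra
qed

theorem lemma5p7:
  fixes Z :: real and W :: "real \<Rightarrow> real" and w :: "nat \<Rightarrow> real"
    and n :: nat and R :: "nat \<Rightarrow> real \<Rightarrow> real" and \<epsilon> :: "nat \<Rightarrow> real"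
    and \<zeta> :: "nat \<Rightarrow> nat \<Rightarrow> real"
  assumes Zpos: "Z > 0"
    and W_bdd: "\<exists>B. \<forall>r\<ge>0. \<bar>W r\<bar> \<le> B"
    and W_smooth: "smooth_fun (\<lambda>x::real^3. W (norm x))"
    and W_exp: "\<forall>N. (\<lambda>r. W r - (\<Sum>k\<le>N. w (2*k) * r ^ (2*k)))
                      \<in> O[at_right 0](\<lambda>r. r ^ (2*N+2))"
    and R_cont: "\<forall>i\<in>{1..n}. continuous_on {0..} (R i)"
    and R_diff: "\<forall>i\<in>{1..n}. \<forall>r>0.
                   (R i has_real_derivative deriv (R i) r) (at r) \<and>
                   (deriv (R i) has_real_derivative deriv (deriv (R i)) r) (at r)"
    and R_ode: "\<forall>i\<in>{1..n}. \<forall>r>0.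
                  - (1/2) * deriv (deriv (R i)) r - (1/r) * deriv (R i) r
                  - (Z/r) * R i r + W r * R i r = \<epsilon> i * R i r"
    and R_norm: "\<forall>i\<in>{1..n}. ((\<lambda>r. (R i r)^2 * r^2) has_integral 1) {0<..}"
    and R_exp: "\<forall>i\<in>{1..n}. \<forall>N. (\<lambda>r. R i r - (\<Sum>j\<le>N. \<zeta> j i * r ^ j))
                      \<in> O[at_right 0](\<lambda>r. r ^ (N+1))"
  shows "(\<exists>\<mu> \<nu> :: nat \<Rightarrow> nat \<Rightarrow> real.
            (\<forall>k<n. \<forall>i\<in>{1..n}.
                \<zeta> (2*k) i = (\<Sum>j\<le>k. \<mu> k j * \<epsilon> i ^ j * \<zeta> 0 i) \<and>
                \<zeta> (2*k+1) i = (\<Sum>j\<le>k. \<nu> k j * \<epsilon> i ^ j * \<zeta> 0 i)) \<and>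
            (\<forall>k<n. \<mu> k k \<noteq> 0))
       \<and> (\<forall>i\<in>{1..n}.
            \<zeta> 1 i = - Z * \<zeta> 0 i \<and>
            \<zeta> 2 i = - (1/3) * \<epsilon> i * \<zeta> 0 i + (1/3) * (Z^2 + w 0) * \<zeta> 0 i \<and>
            \<zeta> 3 i = (2/9) * Z * \<epsilon> i * \<zeta> 0 i - (Z^3/18 + (2/9) * Z * w 0) * \<zeta> 0 i \<and>
            \<zeta> 4 i = (1/30) * \<epsilon> i ^ 2 * \<zeta> 0 i - (Z^2/18 + w 0/15) * \<epsilon> i * \<zeta> 0 i
                     + (Z^4/180 + Z^2 * w 0/18 + (w 0)^2/30 + w 2/10) * \<zeta> 0 i \<and>
            \<zeta> 5 i = - (23/1350) * Z * \<epsilon> i ^ 2 * \<zeta> 0 i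
                     + (Z^3/135 + (23/675) * w 0 * Z) * \<epsilon> i * \<zeta> 0 i
                     - (Z^5/2700 + Z^3 * w 0/135 + (23/1350) * Z * (w 0)^2
                        + (11/150) * Z * w 2) * \<zeta> 0 i)"
proof -
  define \<omega> where "\<omega> = (\<lambda>j. if even j then w j else (0::real))"
  have W_expansion: "asymp_expansion W \<omega>"
    unfolding \<omega>_def by (rule asymp_expansion_even[OF W_exp])
  have rec: "real m * real (m + 1) * \<zeta> m i = ode_rhs Z (\<epsilon> i) \<omega> (\<lambda>j. \<zeta> j i) m"
    if "i \<in> {1..n}" for i m
    using that R_diff R_ode R_exp
    by (intro ode_recurrence[OF W_expansion]) (auto simp: asymp_expansion_def)
  have expand: "\<zeta> m i = (\<Sum>j\<le>k. coeff (zeta_poly Z \<omega> m) j * \<epsilon> i ^ j * \<zeta> 0 i)"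
    if "i \<in> {1..n}" "m div 2 \<le> k" for i m k
    using poly_zeta_poly[OF rec[OF that(1)], of m]
      poly_eq_sum_degree_le[OF order.trans[OF degree_zeta_poly that(2)]]
    by (simp add: sum_distrib_right)
  have lead: "coeff (zeta_poly Z \<omega> (2 * k)) k \<noteq> 0" for k
    by (simp add: coeff_zeta_poly_even)
  have "\<omega> 0 = w 0" "\<omega> 1 = 0" "\<omega> 2 = w 2" "\<omega> 3 = 0"
    by (simp_all add: \<omega>_def)
  note low = low_order_coeffs[OF rec, OF _ this(2,4), unfolded this(1,3)]
  \<comment> \<open>The witnesses \<mu> and \<nu> are found by unification with expand.\<close>
  show ?thesis
    by (intro conjI exI allI ballI impI; (rule expand lead low)?; simp)
qed

end
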